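(* Let $p\geq 3$ and put $\lambda=\lambda_p=2\cos(\pi/p)$. Every $G_p$-equivalence class of $\lambda$-BQFs contains either only hyperbolic forms or no hyperbolic forms.
   Context: Let $S=\begin{pmatrix}1&\lambda\\0&1\end{pmatrix}$, $T=\begin{pmatrix}0&-1\\1&0\end{pmatrix}$, and $G_p=\langle S,T\rangle/\{\pm I\}$, acting on $\mathbb{C}\cup\{\infty\}$ by linear fractional transformations. An element $\begin{pmatrix}a&b\\c&d\end{pmatrix}$ is hyperbolic if $|a+d|>2$; a hyperbolic fixed point is a real number fixed by a hyperbolic element of $G_p$. A $\lambda$-BQF is $Q(x,y)=Ax^2+Bxy+Cy^2=[A,B,C]$ with $A,B,C\in\mathbb{Z}[\lambda]$ and positive discriminant $B^2-4AC$. For $M=\begin{pmatrix}a&b\\c&d\end{pmatrix}\in G_p$, $(Q\circ M)(x,y)=Q(ax+by,cx+dy)$; $Q$ and $Q'$ are $G_p$-equivalent if $Q'=Q\circ V$ for some $V\in G_p$. For a hyperbolic fixed point $\alpha$, choose a matrix $\begin{pmatrix}a&b\\c&d\end{pmatrix}$ representing a generator of the stabilizer of $\alpha$ in $G_p$, replaced by its inverse if necessary so that $\alpha=\frac{a-d+\sqrt{D}}{2c}$ with $D=(a+d)^2-4$; then $Q_\alpha=[c,d-a,-b]$. A $\lambda$-BQF is hyperbolic if it equals $Q_\alpha$ for some hyperbolic fixed point $\alpha$. *)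

theory Defs
  imports Complex_Main "HOL-Computational_Algebra.Polynomial"
begin

text \<open>2x2 real matrices (a,b,c,d) = [[a,b],[c,d]].\<close>
type_synonym mat2 = "real \<times> real \<times> real \<times> real"

fun mmul :: "mat2 \<Rightarrow> mat2 \<Rightarrow> mat2" where
  "mmul (a,b,c,d) (a',b',c',d') =
     (a*a' + b*c', a*b' + b*d', c*a' + d*c', c*b' + d*d')"

definition mid :: mat2 where "mid = (1,0,0,1)"

fun mneg :: "mat2 \<Rightarrow> mat2" where
  "mneg (a,b,c,d) = (-a,-b,-c,-d)"

text \<open>Inverse of a determinant-one matrix.\<close>
fun minv :: "mat2 \<Rightarrow> mat2" where
  "minv (a,b,c,d) = (d,-b,-c,a)"

fun mpow_nat :: "mat2 \<Rightarrow> nat \<Rightarrow> mat2" where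
  "mpow_nat M 0 = mid"
| "mpow_nat M (Suc n) = mmul M (mpow_nat M n)"

definition mpow :: "mat2 \<Rightarrow> int \<Rightarrow> mat2" where
  "mpow M k = (if k \<ge> 0 then mpow_nat M (nat k) else mpow_nat (minv M) (nat (- k)))"

definition lam :: "nat \<Rightarrow> real" where
  "lam p = 2 * cos (pi / real p)"

definition matS :: "real \<Rightarrow> mat2" where "matS l = (1, l, 0, 1)"
definition matT :: mat2 where "matT = (0, -1, 1, 0)"

text \<open>The subgroup of SL(2,R) generated by S and T (it contains -I = T^2);
  the Hecke group G_p is its quotient by {+-I}.\<close>
inductive_set hecke :: "real \<Rightarrow> mat2 set" for l :: real where
  hecke_id: "mid \<in> hecke l"
| hecke_S: "M \<in> hecke l \<Longrightarrow> mmul M (matS l) \<in> hecke l"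
| hecke_Sinv: "M \<in> hecke l \<Longrightarrow> mmul M (minv (matS l)) \<in> hecke l"
| hecke_T: "M \<in> hecke l \<Longrightarrow> mmul M matT \<in> hecke l"
| hecke_Tinv: "M \<in> hecke l \<Longrightarrow> mmul M (minv matT) \<in> hecke l"

fun is_hyperbolic :: "mat2 \<Rightarrow> bool" where
  "is_hyperbolic (a,b,c,d) \<longleftrightarrow> \<bar>a + d\<bar> > 2"

text \<open>M fixes the real point x under z \<mapsto> (az+b)/(cz+d). For det M = 1 this is
  equivalent to cx^2 + (d-a)x - b = 0 (the case cx+d = 0 is then impossible).\<close>
fun fixes_pt :: "mat2 \<Rightarrow> real \<Rightarrow> bool" where
  "fixes_pt (a,b,c,d) x \<longleftrightarrow> c*x + d \<noteq> 0 \<and> (a*x + b) / (c*x + d) = x"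

definition hyp_fixed_point :: "real \<Rightarrow> real \<Rightarrow> bool" where
  "hyp_fixed_point l x \<longleftrightarrow> (\<exists>M \<in> hecke l. is_hyperbolic M \<and> fixes_pt M x)"

text \<open>M represents a generator of the stabilizer of x in G_p = hecke/{+-I}.\<close>
definition stab_generator :: "real \<Rightarrow> real \<Rightarrow> mat2 \<Rightarrow> bool" where
  "stab_generator l x M \<longleftrightarrow> M \<in> hecke l \<and> fixes_pt M x \<and>
     (\<forall>N \<in> hecke l. fixes_pt N x \<longrightarrow> (\<exists>k::int. N = mpow M k \<or> N = mneg (mpow M k)))"

definition Zlam :: "real \<Rightarrow> real set" where
  "Zlam l = {x. \<exists>q :: int poly. x = poly (map_poly real_of_int q) l}"

type_synonym bqf = "real \<times> real \<times> real"

fun is_lam_BQF :: "real \<Rightarrow> bqf \<Rightarrow> bool" where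
  "is_lam_BQF l (A,B,C) \<longleftrightarrow> A \<in> Zlam l \<and> B \<in> Zlam l \<and> C \<in> Zlam l \<and> B^2 - 4*A*C > 0"

text \<open>(Q o M)(x,y) = Q(ax+by, cx+dy).\<close>
fun bqf_act :: "bqf \<Rightarrow> mat2 \<Rightarrow> bqf" where
  "bqf_act (A,B,C) (a,b,c,d) =
     (A*a^2 + B*a*c + C*c^2, 2*A*a*b + B*(a*d + b*c) + 2*C*c*d, A*b^2 + B*b*d + C*d^2)"

definition equiv_bqf :: "real \<Rightarrow> bqf \<Rightarrow> bqf \<Rightarrow> bool" where
  "equiv_bqf l Q Q' \<longleftrightarrow> (\<exists>V \<in> hecke l. Q' = bqf_act Q V)"

text \<open>Q = Q_alpha for a hyperbolic fixed point alpha, with M = (a,b,c,d) a generator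
  of the stabilizer normalized so that alpha = (a-d+sqrt D)/(2c).\<close>
definition is_hyp_BQF :: "real \<Rightarrow> bqf \<Rightarrow> bool" where
  "is_hyp_BQF l Q \<longleftrightarrow> is_lam_BQF l Q \<and>
     (\<exists>\<alpha> a b c d. hyp_fixed_point l \<alpha> \<and> stab_generator l \<alpha> (a,b,c,d) \<and> c \<noteq> 0 \<and>
        \<alpha> = (a - d + sqrt ((a+d)^2 - 4)) / (2*c) \<and> Q = (c, d - a, -b))"

end

theory Submission
  imports Defs
begin

text \<open>If \<open>Q = Q\<^sub>\<alpha>\<close> with \<open>M = (a,b,c,d)\<close> generating the stabiliser of \<open>\<alpha>\<close>, and \<open>V \<in> G\<^sub>p\<close>,
  then \<open>Q \<circ> V\<close> is the form attached to \<open>V\<^sup>-\<^sup>1 \<alpha>\<close>, whose stabiliser is generated by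
  \<open>V\<^sup>-\<^sup>1 M V\<close>: the trace and the eigenvalue \<open>c \<alpha> + d\<close> of the eigenvector \<open>(\<alpha>, 1)\<close> are
  unchanged, and these fix the normalisation \<open>\<alpha> = (a - d + \<surd>D) / (2c)\<close>. The one non-formal point
  is that the conjugate still has non-zero lower-left entry, i.e. that no hyperbolic element of
  \<open>G\<^sub>p\<close> fixes \<open>\<infinity>\<close>. Every element of \<open>G\<^sub>p\<close> is \<open>\<plusminus>\<close> an alternating product of \<open>T\<close> and powers
  \<open>U\<^sup>k\<close> (\<open>1 \<le> k < p\<close>) of \<open>U = S T\<close>, whose entries are the ratios \<open>sin (j\<pi>/p) / sin (\<pi>/p)\<close>, all
  \<open>0\<close> or \<open>\<ge> 1\<close>. Along such a product the bottom row \<open>(c, d)\<close> is either a signed unit vector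
  or has \<open>|c|, |d| \<ge> 1\<close>, so \<open>c = 0\<close> forces \<open>d = \<plusminus>1\<close> and trace \<open>\<plusminus>2\<close>.\<close>

lemma mmul_assoc: "mmul (mmul A B) C = mmul A (mmul B C)"
  by (cases A; cases B; cases C) (simp add: algebra_simps)

lemma mmul_mid [simp]: "mmul M mid = M" "mmul mid M = M"
  by (cases M; simp add: mid_def)+

lemma mmul_mneg [simp]: "mmul M (mneg N) = mneg (mmul M N)" "mmul (mneg M) N = mneg (mmul M N)"
  by (cases M; cases N; simp)+

lemma mneg_mneg [simp]: "mneg (mneg M) = M"
  by (cases M) simp

lemma minv_minv [simp]: "minv (minv M) = M"
  by (cases M) simp

lemma minv_mmul: "minv (mmul A B) = mmul (minv B) (minv A)"
  by (cases A; cases B) (simp add: algebra_simps)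

fun mdet :: "mat2 \<Rightarrow> real" where "mdet (a,b,c,d) = a*d - b*c"
fun mtrace :: "mat2 \<Rightarrow> real" where "mtrace (a,b,c,d) = a + d"
fun mlower :: "mat2 \<Rightarrow> real" where "mlower (a,b,c,d) = c"
fun bottom_row :: "mat2 \<Rightarrow> real \<times> real" where "bottom_row (a,b,c,d) = (c,d)"

lemma mdet_mmul: "mdet (mmul A B) = mdet A * mdet B"
  by (cases A; cases B) (simp add: algebra_simps)

lemma mmul_minv:
  "mdet M = 1 \<Longrightarrow> mmul M (minv M) = mid"
  "mdet M = 1 \<Longrightarrow> mmul (minv M) M = mid"
  by (cases M; simp add: mid_def algebra_simps)+

lemma mmul_minv_cancel:
  "mdet V = 1 \<Longrightarrow> mmul V (mmul (minv V) X) = X"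
  "mdet V = 1 \<Longrightarrow> mmul (minv V) (mmul V X) = X"
  by (simp_all add: mmul_assoc[symmetric] mmul_minv)

lemma is_hyperbolic_iff: "is_hyperbolic M \<longleftrightarrow> \<bar>mtrace M\<bar> > 2"
  by (cases M) simp

lemma hecke_mdet: "M \<in> hecke l \<Longrightarrow> mdet M = 1"
  by (induction rule: hecke.induct) (auto simp: mdet_mmul mid_def matS_def matT_def)

lemma hecke_mmul:
  assumes "M \<in> hecke l" "N \<in> hecke l"
  shows "mmul M N \<in> hecke l"
  using assms(2)
proof (induction N rule: hecke.induct)
  case (hecke_S N)
  then show ?case using hecke.hecke_S[of "mmul M N"] by (simp add: mmul_assoc)
next
  case (hecke_Sinv N)
  then show ?case using hecke.hecke_Sinv[of "mmul M N"] by (simp add: mmul_assoc)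
next
  case (hecke_T N)
  then show ?case using hecke.hecke_T[of "mmul M N"] by (simp add: mmul_assoc)
next
  case (hecke_Tinv N)
  then show ?case using hecke.hecke_Tinv[of "mmul M N"] by (simp add: mmul_assoc)
qed (simp add: assms)

lemma hecke_generators:
  "matS l \<in> hecke l" "minv (matS l) \<in> hecke l" "matT \<in> hecke l" "minv matT \<in> hecke l"
  using hecke.intros(2-5)[OF hecke_id] by simp_all

lemma hecke_minv: "M \<in> hecke l \<Longrightarrow> minv M \<in> hecke l"
proof (induction rule: hecke.induct)
  case hecke_id
  then show ?case using hecke.hecke_id by (simp add: mid_def)
qed (use hecke_generators in \<open>simp_all add: minv_mmul hecke_mmul del: minv.simps\<close>)

section \<open>Powers of \<open>U = S T\<close>\<close>

definition matU :: "nat \<Rightarrow> mat2" where "matU p = (lam p, -1, 1, 0)"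

definition sin_ratio :: "nat \<Rightarrow> int \<Rightarrow> real" where
  "sin_ratio p j = sin (real_of_int j * (pi / real p)) / sin (pi / real p)"

lemma sin_pi_div_pos: "2 \<le> p \<Longrightarrow> 0 < sin (pi / real p)"
  by (intro sin_gt_zero) (auto simp: field_simps)

lemma sin_ratio_rec:
  assumes "2 \<le> p"
  shows "lam p * sin_ratio p (j + 1) = sin_ratio p (j + 2) + sin_ratio p j"
proof -
  define t where "t = pi / real p"
  have "2 * cos t * sin ((j + 1) * t) = sin ((j + 1) * t + t) + sin ((j + 1) * t - t)"
    by (simp add: sin_add sin_diff)
  also have "\<dots> = sin ((j + 2) * t) + sin (j * t)"
    by (simp add: algebra_simps)
  finally have "2 * cos t * sin ((j + 1) * t) = sin ((j + 2) * t) + sin (j * t)" .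
  with sin_pi_div_pos[OF assms] show ?thesis
    unfolding lam_def sin_ratio_def t_def[symmetric] by (simp add: field_simps)
qed

lemma matU_pow:
  assumes "2 \<le> p"
  shows "mpow_nat (matU p) k =
    (sin_ratio p (int k + 1), - sin_ratio p k, sin_ratio p k, - sin_ratio p (int k - 1))"
proof (induction k)
  case 0
  show ?case using sin_pi_div_pos[OF assms] by (simp add: mid_def sin_ratio_def)
next
  case (Suc k)
  have "lam p * sin_ratio p (int k + 1) - sin_ratio p k = sin_ratio p (int k + 2)"
    and "lam p * sin_ratio p k - sin_ratio p (int k - 1) = sin_ratio p (int k + 1)"
    using sin_ratio_rec[OF assms, of k] sin_ratio_rec[OF assms, of "int k - 1"]
    by (simp_all add: ac_simps)
  with Suc show ?case by (simp add: matU_def algebra_simps)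
qed

lemma sin_ratio_values:
  assumes "2 \<le> p"
  shows "sin_ratio p 0 = 0" "sin_ratio p 1 = 1" "sin_ratio p p = 0" "sin_ratio p (int p - 1) = 1"
    "sin_ratio p (int p + 1) = -1" "sin_ratio p (int p - 2) = lam p"
proof -
  define t where "t = pi / real p"
  have s: "sin t > 0" using sin_pi_div_pos[OF assms] t_def by simp
  have pt: "real p * t = pi" using assms unfolding t_def by simp
  have "(real p - 1) * t = pi - t" "(real p + 1) * t = pi + t" "(real p - 2) * t = pi - 2 * t"
    using pt by (simp_all add: algebra_simps)
  then show "sin_ratio p 0 = 0" "sin_ratio p 1 = 1" "sin_ratio p p = 0"
    "sin_ratio p (int p - 1) = 1" "sin_ratio p (int p + 1) = -1" "sin_ratio p (int p - 2) = lam p"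
    using s pt by (simp_all add: sin_ratio_def t_def[symmetric] lam_def sin_double)
qed

lemma sin_ratio_ge_1:
  assumes "2 \<le> p" "1 \<le> j" "j \<le> int p - 1"
  shows "1 \<le> sin_ratio p j"
proof -
  define t where "t = pi / real p"
  have t: "0 < t" "real p * t = pi" using assms(1) unfolding t_def by auto
  have "1 * t \<le> j * t" "(j + 1) * t \<le> real p * t"
    using assms(2,3) t(1) by (intro mult_right_mono; simp)+
  then have "t \<le> j * t" "j * t \<le> pi - t"
    using t(2) by (simp_all add: algebra_simps)
  then have "sin t \<le> sin (j * t)"
    using t(1) sin_monotone_2pi_le[of t "j * t"] sin_monotone_2pi_le[of t "pi - j * t"]
    by (cases "j * t \<le> pi/2") auto
  then show ?thesis
    using sin_pi_div_pos[OF assms(1)] unfolding sin_ratio_def t_def[symmetric] by simp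
qed

lemma sin_ratio_zero_or_ge_1:
  assumes "2 \<le> p" "0 \<le> j" "j \<le> int p"
  shows "sin_ratio p j = 0 \<or> 1 \<le> sin_ratio p j"
  using sin_ratio_ge_1[OF assms(1)] sin_ratio_values[OF assms(1)] assms
  by (cases "j = 0"; cases "j = int p") auto

lemma matU_pow_order: "2 \<le> p \<Longrightarrow> mpow_nat (matU p) p = mneg mid"
  using matU_pow[of p p] sin_ratio_values[of p] by (simp add: mid_def)

lemma mpow_nat_Suc_right: "mpow_nat M (Suc n) = mmul (mpow_nat M n) M"
  by (induction n) (simp_all add: mmul_assoc[symmetric])

lemma matS_eq: "matS (lam p) = mneg (mmul (matU p) matT)"
  by (simp add: matS_def matU_def matT_def)

lemma minv_matS_eq:
  "2 \<le> p \<Longrightarrow> minv (matS (lam p)) = mneg (mmul matT (mpow_nat (matU p) (p - 1)))"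
  using matU_pow[of p "p - 1"] sin_ratio_values[of p] by (simp add: matS_def matT_def of_nat_diff)

section \<open>No hyperbolic element of \<open>G\<^sub>p\<close> fixes \<open>\<infinity>\<close>\<close>

fun axis_unit :: "real \<times> real \<Rightarrow> bool" where
  "axis_unit (c,d) \<longleftrightarrow> (c = 0 \<and> \<bar>d\<bar> = 1) \<or> (d = 0 \<and> \<bar>c\<bar> = 1)"

fun same_sign_ge_1 :: "real \<times> real \<Rightarrow> bool" where
  "same_sign_ge_1 (c,d) \<longleftrightarrow> (1 \<le> c \<and> 1 \<le> d) \<or> (c \<le> -1 \<and> d \<le> -1)"

fun opposite_sign_ge_1 :: "real \<times> real \<Rightarrow> bool" where
  "opposite_sign_ge_1 (c,d) \<longleftrightarrow> (1 \<le> c \<and> d \<le> -1) \<or> (c \<le> -1 \<and> 1 \<le> d)"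

lemma row_step_U:
  fixes c d A B C :: real
  assumes A: "A = 0 \<or> 1 \<le> A" and C: "C = 0 \<or> 1 \<le> C" and B: "1 \<le> B"
    and AB: "A = 0 \<Longrightarrow> B = 1" and CB: "C = 0 \<Longrightarrow> B = 1"
    and row: "axis_unit (c,d) \<or> same_sign_ge_1 (c,d)"
  shows "axis_unit (c*A + d*B, - c*B - d*C) \<or> opposite_sign_ge_1 (c*A + d*B, - c*B - d*C)"
proof -
  have nonneg: "axis_unit (c*A + d*B, - c*B - d*C) \<or> opposite_sign_ge_1 (c*A + d*B, - c*B - d*C)"
    if "(c = 0 \<and> d = 1) \<or> (c = 1 \<and> d = 0) \<or> (1 \<le> c \<and> 1 \<le> d)" for c d
    using that
  proof (elim disjE conjE)
    assume "1 \<le> c" "1 \<le> d"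
    moreover have "1 \<le> d * B" "1 \<le> c * B"
      using calculation B mult_mono[of 1 _ 1 B] by simp_all
    moreover have "0 \<le> c * A" "0 \<le> d * C"
      using calculation A C by auto
    ultimately show ?thesis by simp
  qed (use A B C AB CB in auto)
  \<comment> \<open>Both invariants are symmetric under \<open>(c, d) \<mapsto> (-c, -d)\<close>.\<close>
  from row consider "(c = 0 \<and> d = 1) \<or> (c = 1 \<and> d = 0) \<or> (1 \<le> c \<and> 1 \<le> d)"
    | "(-c = 0 \<and> -d = 1) \<or> (-c = 1 \<and> -d = 0) \<or> (1 \<le> -c \<and> 1 \<le> -d)"
    by fastforce
  then show ?thesis
  proof cases
    case 1
    then show ?thesis by (rule nonneg)
  next
    case 2
    from nonneg[OF this] show ?thesis by (auto simp: algebra_simps)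
  qed
qed

lemma bottom_row_step_U:
  assumes p: "2 \<le> p" and k: "1 \<le> k" "k < p"
    and row: "axis_unit (bottom_row M) \<or> same_sign_ge_1 (bottom_row M)"
  shows "axis_unit (bottom_row (mmul M (mpow_nat (matU p) k)))
    \<or> opposite_sign_ge_1 (bottom_row (mmul M (mpow_nat (matU p) k)))"
proof -
  obtain a b c d where M: "M = (a,b,c,d)" by (cases M)
  define A where "A = sin_ratio p (int k + 1)"
  define B where "B = sin_ratio p k"
  define C where "C = sin_ratio p (int k - 1)"
  have A: "A = 0 \<or> 1 \<le> A" and C: "C = 0 \<or> 1 \<le> C"
    unfolding A_def C_def using k by (intro sin_ratio_zero_or_ge_1[OF p]; simp)+
  have B: "1 \<le> B" unfolding B_def using k by (intro sin_ratio_ge_1[OF p]) auto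
  have AB: "B = 1" if "A = 0"
  proof -
    have "int k = int p - 1"
      using sin_ratio_ge_1[OF p, of "int k + 1"] that k unfolding A_def by fastforce
    then show ?thesis using sin_ratio_values[OF p] B_def by simp
  qed
  have CB: "B = 1" if "C = 0"
  proof -
    have "k = 1"
      using sin_ratio_ge_1[OF p, of "int k - 1"] that k unfolding C_def by fastforce
    then show ?thesis using sin_ratio_values[OF p] B_def by simp
  qed
  have "bottom_row (mmul M (mpow_nat (matU p) k)) = (c*A + d*B, - c*B - d*C)"
    unfolding M matU_pow[OF p] A_def B_def C_def by (simp add: algebra_simps)
  with row_step_U[OF A C B AB CB] row M show ?thesis by simp
qed

lemma bottom_row_step_T:
  "axis_unit (bottom_row M) \<or> opposite_sign_ge_1 (bottom_row M) \<Longrightarrow>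
    axis_unit (bottom_row (mmul M matT)) \<or> same_sign_ge_1 (bottom_row (mmul M matT))"
  by (cases M) (auto simp: matT_def)

datatype word_end = Empty | End_T | End_U

text \<open>\<open>(M, e) \<in> reduced_word p\<close>: \<open>M\<close> is an alternating product of factors \<open>T\<close> and \<open>U\<^sup>k\<close>
  with \<open>1 \<le> k < p\<close>, and \<open>e\<close> records the last factor.\<close>
inductive_set reduced_word :: "nat \<Rightarrow> (mat2 \<times> word_end) set" for p where
  "(mid, Empty) \<in> reduced_word p"
| "(M, e) \<in> reduced_word p \<Longrightarrow> e \<noteq> End_T \<Longrightarrow> (mmul M matT, End_T) \<in> reduced_word p"
| "(M, e) \<in> reduced_word p \<Longrightarrow> e \<noteq> End_U \<Longrightarrow> 1 \<le> k \<Longrightarrow> k < p \<Longrightarrow>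
    (mmul M (mpow_nat (matU p) k), End_U) \<in> reduced_word p"

lemma reduced_word_bottom_row:
  assumes "(M, e) \<in> reduced_word p" "2 \<le> p"
  shows "case e of
      Empty \<Rightarrow> M = mid
    | End_T \<Rightarrow> axis_unit (bottom_row M) \<or> same_sign_ge_1 (bottom_row M)
    | End_U \<Rightarrow> axis_unit (bottom_row M) \<or> opposite_sign_ge_1 (bottom_row M)"
  using assms(1)
proof (induction rule: reduced_word.induct)
  case (2 M e)
  then show ?case using bottom_row_step_T by (cases e) (auto simp: mid_def)
next
  case (3 M e k)
  then show ?case using bottom_row_step_U[OF assms(2)] by (cases e) (auto simp: mid_def)
qed simp

lemma reduced_word_lower_zero:
  assumes "(M, e) \<in> reduced_word p" "2 \<le> p" "bottom_row M = (0, d)"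
  shows "\<bar>d\<bar> = 1"
  using reduced_word_bottom_row[OF assms(1,2)] assms(3) by (cases e) (auto simp: mid_def)

definition signed_reduced_word :: "nat \<Rightarrow> mat2 set" where
  "signed_reduced_word p = {M. \<exists>N e. (N, e) \<in> reduced_word p \<and> (M = N \<or> M = mneg N)}"

lemma signed_reduced_wordI: "(N, e) \<in> reduced_word p \<Longrightarrow> N \<in> signed_reduced_word p"
  unfolding signed_reduced_word_def by blast

lemma signed_reduced_word_mneg:
  "M \<in> signed_reduced_word p \<Longrightarrow> mneg M \<in> signed_reduced_word p"
  unfolding signed_reduced_word_def using mneg_mneg by blast

lemma signed_reduced_word_mmul:
  assumes "\<And>N e. (N, e) \<in> reduced_word p \<Longrightarrow> mmul N X \<in> signed_reduced_word p"
    and "M \<in> signed_reduced_word p"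
  shows "mmul M X \<in> signed_reduced_word p"
proof -
  obtain N e where "(N, e) \<in> reduced_word p" "M = N \<or> M = mneg N"
    using assms(2) unfolding signed_reduced_word_def by blast
  with assms(1)[of N e] show ?thesis
    using signed_reduced_word_mneg mmul_mneg(2) by metis
qed

lemma signed_reduced_word_matT:
  assumes "M \<in> signed_reduced_word p"
  shows "mmul M matT \<in> signed_reduced_word p"
  using _ assms
proof (rule signed_reduced_word_mmul)
  fix N e assume N: "(N, e) \<in> reduced_word p"
  show "mmul N matT \<in> signed_reduced_word p"
  proof (cases "e = End_T")
    case True
    from N True obtain N' e' where "N = mmul N' matT" "(N', e') \<in> reduced_word p"
      by (cases rule: reduced_word.cases) auto
    moreover have "mmul matT matT = mneg mid" by (simp add: matT_def mid_def)
    ultimately have "mmul N matT = mneg N'" "(N', e') \<in> reduced_word p"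
      by (simp_all add: mmul_assoc)
    then show ?thesis by (metis signed_reduced_wordI signed_reduced_word_mneg)
  next
    case False
    with N show ?thesis by (blast intro: signed_reduced_wordI reduced_word.intros(2))
  qed
qed

lemma signed_reduced_word_matU:
  assumes p: "2 \<le> p" and "M \<in> signed_reduced_word p"
  shows "mmul M (matU p) \<in> signed_reduced_word p"
  using _ assms(2)
proof (rule signed_reduced_word_mmul)
  fix N e assume N: "(N, e) \<in> reduced_word p"
  show "mmul N (matU p) \<in> signed_reduced_word p"
  proof (cases "e = End_U")
    case True
    from N True obtain N' e' k where N': "N = mmul N' (mpow_nat (matU p) k)"
      "(N', e') \<in> reduced_word p" "e' \<noteq> End_U" "1 \<le> k" "k < p"
      by (cases rule: reduced_word.cases) auto
    have prod: "mmul N (matU p) = mmul N' (mpow_nat (matU p) (Suc k))"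
      using N'(1) by (simp add: mmul_assoc mpow_nat_Suc_right del: mpow_nat.simps(2))
    show ?thesis
    proof (cases "Suc k = p")
      case True
      then have "mmul N (matU p) = mneg N'" using prod matU_pow_order[OF p] by simp
      then show ?thesis by (metis N'(2) signed_reduced_wordI signed_reduced_word_mneg)
    next
      case False
      then have "(mmul N' (mpow_nat (matU p) (Suc k)), End_U) \<in> reduced_word p"
        using reduced_word.intros(3)[OF N'(2,3)] N'(5) by (simp del: mpow_nat.simps(2))
      then show ?thesis unfolding prod by (rule signed_reduced_wordI)
    qed
  next
    case False
    then have "(mmul N (mpow_nat (matU p) 1), End_U) \<in> reduced_word p"
      using reduced_word.intros(3)[OF N False, of 1] p by simp
    then show ?thesis by (simp add: signed_reduced_wordI)
  qed
qed

lemma signed_reduced_word_matU_pow: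
  "2 \<le> p \<Longrightarrow> M \<in> signed_reduced_word p \<Longrightarrow>
    mmul M (mpow_nat (matU p) n) \<in> signed_reduced_word p"
  by (induction n) (simp_all add: signed_reduced_word_matU mpow_nat_Suc_right
      mmul_assoc[symmetric] del: mpow_nat.simps(2))

lemma hecke_subset_signed_reduced_word:
  assumes "M \<in> hecke (lam p)" "2 \<le> p"
  shows "M \<in> signed_reduced_word p"
  using assms(1)
proof (induction rule: hecke.induct)
  case hecke_id
  then show ?case using reduced_word.intros(1) by (rule signed_reduced_wordI)
next
  case (hecke_S M)
  then show ?case unfolding matS_eq
    by (simp add: mmul_assoc[symmetric] signed_reduced_word_mneg signed_reduced_word_matT
        signed_reduced_word_matU assms(2))
next
  case (hecke_Sinv M)
  then show ?case unfolding minv_matS_eq[OF assms(2)]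
    by (simp add: mmul_assoc[symmetric] signed_reduced_word_mneg signed_reduced_word_matT
        signed_reduced_word_matU_pow assms(2) del: mpow_nat.simps(2))
next
  case (hecke_T M)
  from hecke_T.IH show ?case by (rule signed_reduced_word_matT)
next
  case (hecke_Tinv M)
  have "minv matT = mneg matT" by (simp add: matT_def)
  with hecke_Tinv show ?case by (simp add: signed_reduced_word_mneg signed_reduced_word_matT)
qed

definition hyperbolic_moves_infinity :: "real \<Rightarrow> bool" where
  "hyperbolic_moves_infinity l \<longleftrightarrow> (\<forall>M \<in> hecke l. is_hyperbolic M \<longrightarrow> mlower M \<noteq> 0)"

lemma hyperbolic_moves_infinity_lam:
  assumes p: "2 \<le> p"
  shows "hyperbolic_moves_infinity (lam p)"
  unfolding hyperbolic_moves_infinity_def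
proof (intro ballI impI notI)
  fix M assume M_hecke: "M \<in> hecke (lam p)" and hyp: "is_hyperbolic M"
    and lower: "mlower M = 0"
  from lower obtain a b d where M: "M = (a,b,0,d)" by (cases M) auto
  obtain N e where "(N, e) \<in> reduced_word p" "M = N \<or> M = mneg N"
    using hecke_subset_signed_reduced_word[OF M_hecke p]
    unfolding signed_reduced_word_def by blast
  moreover from this(2) have "bottom_row N = (0, d) \<or> bottom_row N = (0, - d)"
    using M by (cases N) auto
  ultimately have "\<bar>d\<bar> = 1"
    using reduced_word_lower_zero[OF _ p] by fastforce
  moreover have "a * d = 1" using hecke_mdet[OF M_hecke] M by simp
  ultimately have "\<bar>a + d\<bar> = 2" by (auto simp: abs_if split: if_splits)
  with hyp M show False by simp
qed

section \<open>Conjugation and hyperbolic forms\<close>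

fun mat_vec :: "mat2 \<Rightarrow> real \<times> real \<Rightarrow> real \<times> real" where
  "mat_vec (a,b,c,d) (x,y) = (a*x + b*y, c*x + d*y)"

lemma mat_vec_mmul: "mat_vec (mmul A B) v = mat_vec A (mat_vec B v)"
  by (cases A; cases B; cases v) (simp add: algebra_simps)

lemma mat_vec_scale: "mat_vec A (x,y) = (u,v) \<Longrightarrow> mat_vec A (r*x, r*y) = (r*u, r*v)"
  by (cases A) (auto simp: algebra_simps)

lemma mat_vec_minv_cancel:
  "mdet V = 1 \<Longrightarrow> mat_vec V (mat_vec (minv V) v) = v"
  "mdet V = 1 \<Longrightarrow> mat_vec (minv V) (mat_vec V v) = v"
  by (cases v; simp add: mat_vec_mmul[symmetric] mmul_minv mid_def)+

lemma fixes_pt_iff_eigen: "fixes_pt M x \<longleftrightarrow> (\<exists>e. e \<noteq> 0 \<and> mat_vec M (x,1) = (e*x, e))"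
  by (cases M) (auto simp: field_simps)

definition mconj :: "mat2 \<Rightarrow> mat2 \<Rightarrow> mat2" where
  "mconj V X = mmul (minv V) (mmul X V)"

lemma hecke_mconj: "V \<in> hecke l \<Longrightarrow> X \<in> hecke l \<Longrightarrow> mconj V X \<in> hecke l"
  unfolding mconj_def by (intro hecke_mmul hecke_minv)

lemma mconj_mneg: "mconj V (mneg X) = mneg (mconj V X)"
  unfolding mconj_def by simp

lemma mconj_mconj_minv: "mdet V = 1 \<Longrightarrow> mconj V (mconj (minv V) X) = X"
  unfolding mconj_def by (simp add: mmul_assoc mmul_minv mmul_minv_cancel)

lemma mpow_nat_mconj: "mdet V = 1 \<Longrightarrow> mpow_nat (mconj V M) n = mconj V (mpow_nat M n)"
  by (induction n) (simp_all add: mconj_def mmul_assoc mmul_minv mmul_minv_cancel)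

lemma mpow_mconj: "mdet V = 1 \<Longrightarrow> mpow (mconj V M) k = mconj V (mpow M k)"
proof -
  have "minv (mconj V M) = mconj V (minv M)" by (simp add: mconj_def minv_mmul mmul_assoc)
  then show "mdet V = 1 \<Longrightarrow> ?thesis" by (simp add: mpow_def mpow_nat_mconj)
qed

lemma mtrace_mconj: "mdet V = 1 \<Longrightarrow> mtrace (mconj V X) = mtrace X"
proof -
  have "mtrace (mconj V X) = mdet V * mtrace X"
    unfolding mconj_def by (cases V; cases X) (simp add: algebra_simps)
  then show "mdet V = 1 \<Longrightarrow> ?thesis" by simp
qed

lemma mlower_mpow:
  assumes "mlower M = 0"
  shows "mlower (mpow M k) = 0"
proof -
  have mmul: "mlower (mmul A B) = 0" if "mlower A = 0" "mlower B = 0" for A B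
    using that by (cases A; cases B) simp
  have "mlower (mpow_nat N n) = 0" if "mlower N = 0" for N n
    using that by (induction n) (simp_all add: mid_def mmul)
  moreover have "mlower (minv M) = 0" using assms by (cases M) simp
  ultimately show ?thesis using assms by (simp add: mpow_def)
qed

lemma bqf_act_mmul: "bqf_act (bqf_act Q V) W = bqf_act Q (mmul V W)"
  by (cases Q; cases V; cases W) (simp add: algebra_simps power2_eq_square)

lemma bqf_act_mid: "bqf_act Q mid = Q"
  by (cases Q) (simp add: mid_def)

lemma bqf_act_mconj:
  "mconj V (a,b,c,d) = (a',b',c',d') \<Longrightarrow> bqf_act (c, d - a, -b) V = (c', d' - a', -b')"
  unfolding mconj_def by (cases V) (auto simp: algebra_simps power2_eq_square)

lemma mat_vec_mconj_eigen:
  assumes "mdet V = 1" "mat_vec V (u,w) = (x,z)"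
  shows "mat_vec (mconj V X) (u,w) = (e*u, e*w) \<longleftrightarrow> mat_vec X (x,z) = (e*x, e*z)"
proof -
  have uw: "mat_vec (minv V) (x,z) = (u,w)"
    using mat_vec_minv_cancel(2)[OF assms(1), of "(u,w)"] assms(2) by simp
  have "mat_vec (mconj V X) (u,w) = mat_vec (minv V) (mat_vec X (x,z))"
    unfolding mconj_def by (simp add: mat_vec_mmul assms(2))
  moreover have "(e*u, e*w) = mat_vec (minv V) (e*x, e*z)"
    using mat_vec_scale[OF uw] by simp
  ultimately show ?thesis
    by (metis mat_vec_minv_cancel(1)[OF assms(1)])
qed

lemma mat_vec_mconj_eigen_point:
  assumes "mdet V = 1" "r \<noteq> 0" "mat_vec V (y,1) = (r*x, r)"
  shows "mat_vec (mconj V X) (y,1) = (e*y, e) \<longleftrightarrow> mat_vec X (x,1) = (e*x, e)"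
proof -
  have "mat_vec X (r*x, r*1) = (e*(r*x), e*r) \<longleftrightarrow> mat_vec X (x,1) = (e*x, e)"
    using mat_vec_scale[of X x 1 _ _ r] mat_vec_scale[of X "r*x" r _ _ "1/r"] assms(2)
    by (cases "mat_vec X (x,1)") auto
  then show ?thesis
    using mat_vec_mconj_eigen[OF assms(1,3), of X e] by simp
qed

lemma fixes_pt_mconj:
  assumes "mdet V = 1" "r \<noteq> 0" "mat_vec V (y,1) = (r*x, r)"
  shows "fixes_pt (mconj V X) y \<longleftrightarrow> fixes_pt X x"
  unfolding fixes_pt_iff_eigen mat_vec_mconj_eigen_point[OF assms] ..

lemma hyp_fixed_point_mconj:
  assumes "V \<in> hecke l" "r \<noteq> 0" "mat_vec V (y,1) = (r*x, r)" "hyp_fixed_point l x"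
  shows "hyp_fixed_point l y"
proof -
  obtain N where N: "N \<in> hecke l" "is_hyperbolic N" "fixes_pt N x"
    using assms(4) unfolding hyp_fixed_point_def by blast
  have "mdet V = 1" using hecke_mdet[OF assms(1)] .
  then have "mconj V N \<in> hecke l" "is_hyperbolic (mconj V N)" "fixes_pt (mconj V N) y"
    using hecke_mconj[OF assms(1) N(1)] N(2,3) fixes_pt_mconj[OF _ assms(2,3)]
    by (simp_all add: is_hyperbolic_iff mtrace_mconj)
  then show ?thesis unfolding hyp_fixed_point_def by blast
qed

lemma stab_generator_mconj:
  assumes V: "V \<in> hecke l" and r: "r \<noteq> 0" "mat_vec V (y,1) = (r*x, r)"
    and gen: "stab_generator l x M"
  shows "stab_generator l y (mconj V M)"
  unfolding stab_generator_def
proof (intro conjI ballI impI)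
  have det: "mdet V = 1" using hecke_mdet[OF V] .
  show "mconj V M \<in> hecke l" "fixes_pt (mconj V M) y"
    using gen hecke_mconj[OF V] fixes_pt_mconj[OF det r] unfolding stab_generator_def by auto
  fix N assume N: "N \<in> hecke l" "fixes_pt N y"
  have "mconj (minv V) N \<in> hecke l" using hecke_mconj[OF hecke_minv[OF V] N(1)] .
  moreover have "fixes_pt (mconj (minv V) N) x"
    using fixes_pt_mconj[OF det r, of "mconj (minv V) N"] N(2) mconj_mconj_minv[OF det] by simp
  ultimately obtain k where "mconj (minv V) N = mpow M k \<or> mconj (minv V) N = mneg (mpow M k)"
    using gen unfolding stab_generator_def by blast
  then have "N = mconj V (mpow M k) \<or> N = mneg (mconj V (mpow M k))"
    using mconj_mconj_minv[OF det, of N] by (auto simp: mconj_mneg)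
  then show "\<exists>k. N = mpow (mconj V M) k \<or> N = mneg (mpow (mconj V M) k)"
    by (auto simp: mpow_mconj[OF det])
qed

lemma hyp_fixed_point_preimage:
  assumes l: "hyperbolic_moves_infinity l"
    and V: "V \<in> hecke l" and x: "hyp_fixed_point l x"
  obtains y r where "r \<noteq> 0" "mat_vec V (y,1) = (r*x, r)"
proof -
  have det: "mdet V = 1" using hecke_mdet[OF V] .
  obtain N where N: "N \<in> hecke l" "is_hyperbolic N" "fixes_pt N x"
    using x unfolding hyp_fixed_point_def by blast
  then obtain e where e: "mat_vec N (x,1) = (e*x, e*1)"
    unfolding fixes_pt_iff_eigen by auto
  obtain u w where uw: "mat_vec V (u,w) = (x,1)"
    using mat_vec_minv_cancel(1)[OF det, of "(x,1)"] by (metis surj_pair)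
  have "w \<noteq> 0"
    \<comment> \<open>otherwise \<open>V\<close> maps \<open>\<infinity>\<close> to \<open>x\<close> and the hyperbolic \<open>V\<^sup>-\<^sup>1 N V\<close> fixes \<open>\<infinity>\<close>\<close>
  proof
    assume "w = 0"
    moreover have "mat_vec (mconj V N) (u,w) = (e*u, e*w)"
      using mat_vec_mconj_eigen[OF det uw] e by simp
    moreover have "u \<noteq> 0"
    proof
      assume "u = 0"
      with uw \<open>w = 0\<close> show False by (cases V) simp
    qed
    ultimately have "mlower (mconj V N) = 0" by (cases "mconj V N") simp
    moreover have "is_hyperbolic (mconj V N)"
      using N(2) by (simp add: is_hyperbolic_iff mtrace_mconj det)
    ultimately show False using l hecke_mconj[OF V N(1)] unfolding hyperbolic_moves_infinity_def by blast
  qed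
  moreover have "mat_vec V ((1/w)*u, (1/w)*w) = ((1/w)*x, (1/w)*1)"
    using mat_vec_scale[OF uw] .
  ultimately show thesis using that[of "1/w" "u/w"] by simp
qed

lemma stab_generator_mlower_nonzero:
  assumes l: "hyperbolic_moves_infinity l"
    and x: "hyp_fixed_point l x" and gen: "stab_generator l x M"
  shows "mlower M \<noteq> 0"
proof
  assume M: "mlower M = 0"
  obtain N where N: "N \<in> hecke l" "is_hyperbolic N" "fixes_pt N x"
    using x unfolding hyp_fixed_point_def by blast
  then obtain k where "N = mpow M k \<or> N = mneg (mpow M k)"
    using gen unfolding stab_generator_def by blast
  moreover have "mlower (mneg X) = - mlower X" for X by (cases X) simp
  ultimately have "mlower N = 0" using mlower_mpow[OF M, of k] by (metis neg_0_equal_iff_equal)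
  with N l show False unfolding hyperbolic_moves_infinity_def by blast
qed

lemma is_hyp_BQF_bqf_act:
  assumes l: "hyperbolic_moves_infinity l"
    and hyp: "is_hyp_BQF l Q" and V: "V \<in> hecke l" and lam_BQF: "is_lam_BQF l (bqf_act Q V)"
  shows "is_hyp_BQF l (bqf_act Q V)"
proof -
  obtain \<alpha> a b c d where \<alpha>: "hyp_fixed_point l \<alpha>" and gen: "stab_generator l \<alpha> (a,b,c,d)"
    and c: "c \<noteq> 0" and \<alpha>_eq: "\<alpha> = (a - d + sqrt ((a+d)^2 - 4)) / (2*c)"
    and Q: "Q = (c, d - a, -b)"
    using hyp unfolding is_hyp_BQF_def by blast
  obtain y r where r: "r \<noteq> 0" "mat_vec V (y,1) = (r*\<alpha>, r)"
    using hyp_fixed_point_preimage[OF l V \<alpha>] .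
  obtain a' b' c' d' where M': "mconj V (a,b,c,d) = (a',b',c',d')"
    by (cases "mconj V (a,b,c,d)")
  have det: "mdet V = 1" using hecke_mdet[OF V] .
  have y: "hyp_fixed_point l y" using hyp_fixed_point_mconj[OF V r \<alpha>] .
  have gen': "stab_generator l y (a',b',c',d')" using stab_generator_mconj[OF V r gen] M' by simp
  have c': "c' \<noteq> 0" using stab_generator_mlower_nonzero[OF l y gen'] by simp
  obtain e where "mat_vec (a,b,c,d) (\<alpha>,1) = (e*\<alpha>, e)"
    using gen unfolding stab_generator_def fixes_pt_iff_eigen by blast
  then have "mat_vec (a',b',c',d') (y,1) = (e*y, e)" and e: "c*\<alpha> + d = e"
    using mat_vec_mconj_eigen_point[OF det r] M' by (metis, simp)
  then have "2 * c' * y = 2 * e - 2 * d'" by simp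
  also have "2 * e = a + d + sqrt ((a+d)^2 - 4)"
    using c unfolding e[symmetric] \<alpha>_eq by (simp add: field_simps)
  also have "a + d = a' + d'" using mtrace_mconj[OF det, of "(a,b,c,d)"] M' by simp
  finally have "y = (a' - d' + sqrt ((a'+d')^2 - 4)) / (2*c')"
    using c' by (simp add: field_simps)
  then show ?thesis
    unfolding is_hyp_BQF_def using lam_BQF y gen' c' bqf_act_mconj[OF M'] Q by blast
qed

theorem corollary3p4:
  fixes p :: nat and Q Q' :: bqf
  assumes "p \<ge> 3"
    and "is_lam_BQF (lam p) Q" and "is_lam_BQF (lam p) Q'"
    and "equiv_bqf (lam p) Q Q'"
  shows "is_hyp_BQF (lam p) Q \<longleftrightarrow> is_hyp_BQF (lam p) Q'"
proof -
  obtain V where V: "V \<in> hecke (lam p)" and Q': "Q' = bqf_act Q V"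
    using assms(4) unfolding equiv_bqf_def by blast
  have Q: "Q = bqf_act Q' (minv V)"
    using Q' mmul_minv(1)[OF hecke_mdet[OF V]] by (simp add: bqf_act_mmul bqf_act_mid)
  have moves_infinity: "hyperbolic_moves_infinity (lam p)"
    using hyperbolic_moves_infinity_lam assms(1) by simp
  show ?thesis
  proof
    assume "is_hyp_BQF (lam p) Q"
    then show "is_hyp_BQF (lam p) Q'"
      using is_hyp_BQF_bqf_act[OF moves_infinity _ V] assms(3) unfolding Q' by blast
  next
    assume "is_hyp_BQF (lam p) Q'"
    then show "is_hyp_BQF (lam p) Q"
      using is_hyp_BQF_bqf_act[OF moves_infinity _ hecke_minv[OF V]] assms(2) Q by metis
  qed
qed

end
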